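(* For any digraph ${\tt G}$, any two sign assignments $\epsilon,\epsilon'$ on the path poset $P({\tt G})$ are isomorphic, i.e. there is $\eta\colon P({\tt G})\to\mathbb Z_2$ with $\eta(x)+\epsilon'_{x,y}\equiv\epsilon_{x,y}+\eta(y)\pmod 2$ for every covering pair $x\,\tilde\triangleleft\,y$.
   Context: A digraph ${\tt G}=(V,E)$ has finite $V$ and $E\subseteq(V\times V)\setminus\{(v,v)\}$. A multipath is a spanning subgraph (all vertices, subset of edges) each of whose connected components (of the underlying undirected graph) is an isolated vertex or a simple directed path (edges $e_1,\dots,e_k$ with target of $e_i$ equal to source of $e_{i+1}$, no repeated vertex, not a cycle). The path poset $P({\tt G})$ is the set of multipaths ordered by inclusion of edge sets. In a poset, $x\,\tilde\triangleleft\,y$ means $y$ covers $x$; a square is $x,y,y',z$ with $y\neq y'$, $x\,\tilde\triangleleft\,y\,\tilde\triangleleft\,z$, $x\,\tilde\triangleleft\,y'\,\tilde\triangleleft\,z$. A sign assignment assigns $\epsilon_{x,y}\in\mathbb Z_2$ to each covering pair such that $\epsilon_{x,y}+\epsilon_{y,z}\equiv\epsilon_{x,y'}+\epsilon_{y',z}+1\pmod 2$ for every square. *)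

theory Defs
  imports Main
begin

definition digraph :: "'v set \<Rightarrow> ('v \<times> 'v) set \<Rightarrow> bool" where
  "digraph V E \<longleftrightarrow> finite V \<and> E \<subseteq> (V \<times> V) - {(v, v) | v. True}"

definition und_rel :: "('v \<times> 'v) set \<Rightarrow> ('v \<times> 'v) set" where
  "und_rel S = S \<union> S\<inverse>"

definition component :: "'v set \<Rightarrow> ('v \<times> 'v) set \<Rightarrow> 'v \<Rightarrow> 'v set" where
  "component V S v = {w \<in> V. (v, w) \<in> (und_rel S)\<^sup>*}"

definition simple_dpath :: "('v \<times> 'v) set \<Rightarrow> 'v list \<Rightarrow> bool" where
  "simple_dpath F vs \<longleftrightarrow> length vs \<ge> 2 \<and> distinct vs \<and>
     F = {(vs ! i, vs ! (i + 1)) | i. i + 1 < length vs}"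

definition multipath :: "'v set \<Rightarrow> ('v \<times> 'v) set \<Rightarrow> ('v \<times> 'v) set \<Rightarrow> bool" where
  "multipath V E S \<longleftrightarrow> S \<subseteq> E \<and>
     (\<forall>v\<in>V. let C = component V S v; F = {e \<in> S. fst e \<in> C \<and> snd e \<in> C} in
        (C = {v} \<and> F = {}) \<or> (\<exists>vs. set vs = C \<and> simple_dpath F vs))"

definition path_poset :: "'v set \<Rightarrow> ('v \<times> 'v) set \<Rightarrow> ('v \<times> 'v) set set" where
  "path_poset V E = {S. multipath V E S}"

definition covers :: "'a set set \<Rightarrow> 'a set \<Rightarrow> 'a set \<Rightarrow> bool" where
  "covers P x y \<longleftrightarrow> x \<in> P \<and> y \<in> P \<and> x \<subset> y \<and> \<not> (\<exists>z\<in>P. x \<subset> z \<and> z \<subset> y)"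

text \<open>Sign assignment with values in Z_2, represented as bool (addition = exclusive or,
  i.e. \<noteq>). For every square x, y, y', z (y \<noteq> y') the parities differ.\<close>
definition sign_assignment :: "'a set set \<Rightarrow> ('a set \<Rightarrow> 'a set \<Rightarrow> bool) \<Rightarrow> bool" where
  "sign_assignment P \<epsilon> \<longleftrightarrow>
     (\<forall>x y y' z. y \<noteq> y' \<and> covers P x y \<and> covers P y z \<and> covers P x y' \<and> covers P y' z \<longrightarrow>
        ((\<epsilon> x y \<noteq> \<epsilon> y z) = (\<not> (\<epsilon> x y' \<noteq> \<epsilon> y' z))))"

end

(* The difference delta = epsilon + epsilon' of two sign assignments sums to zero around every
   square, i.e. it is a cocycle. The path poset is a downward closed family of finite edge sets
   (deleting an edge from a multipath cuts one of its paths in two), so a covering pair adds a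
   single edge and squares are intervals x, x + a, x + b, x + a + b. Let eta x be the sum of delta
   along a saturated chain from the empty set to x. Any two such chains are related by swapping
   adjacent steps, and every swap crosses a square, so eta is well defined; by construction
   eta x + eta y = delta x y on every covering pair. *)

theory Submission
  imports Defs
begin

definition downward_closed :: "'a set set \<Rightarrow> bool" where
  "downward_closed P \<longleftrightarrow> (\<forall>x\<in>P. \<forall>y\<subseteq>x. y \<in> P)"

lemma downward_closedD: "downward_closed P \<Longrightarrow> x \<in> P \<Longrightarrow> y \<subseteq> x \<Longrightarrow> y \<in> P"
  unfolding downward_closed_def by blast

definition cocycle :: "'a set set \<Rightarrow> ('a set \<Rightarrow> 'a set \<Rightarrow> bool) \<Rightarrow> bool" where
  "cocycle P \<delta> \<longleftrightarrow>
     (\<forall>x y y' z. y \<noteq> y' \<and> covers P x y \<and> covers P y z \<and> covers P x y' \<and> covers P y' z \<longrightarrow>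
        (\<delta> x y \<noteq> \<delta> y z) = (\<delta> x y' \<noteq> \<delta> y' z))"

lemma cocycleD:
  assumes "cocycle P \<delta>" and "y \<noteq> y'"
    and "covers P x y" "covers P y z" "covers P x y'" "covers P y' z"
  shows "(\<delta> x y \<noteq> \<delta> y z) = (\<delta> x y' \<noteq> \<delta> y' z)"
  using assms(1)[unfolded cocycle_def, rule_format, where x=x and y=y and y'=y' and z=z] assms(2-) by simp

lemma sign_assignment_diff_cocycle:
  assumes "sign_assignment P \<epsilon>" and "sign_assignment P \<epsilon>'"
  shows "cocycle P (\<lambda>x y. \<epsilon> x y \<noteq> \<epsilon>' x y)"
  unfolding cocycle_def
proof (intro allI impI)
  fix x y y' z
  assume "y \<noteq> y' \<and> covers P x y \<and> covers P y z \<and> covers P x y' \<and> covers P y' z"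
  then have "(\<epsilon> x y \<noteq> \<epsilon> y z) = (\<not> (\<epsilon> x y' \<noteq> \<epsilon> y' z))"
    and "(\<epsilon>' x y \<noteq> \<epsilon>' y z) = (\<not> (\<epsilon>' x y' \<noteq> \<epsilon>' y' z))"
    using assms[unfolded sign_assignment_def, rule_format, where x=x and y=y and y'=y' and z=z] by simp_all
  then show "((\<epsilon> x y \<noteq> \<epsilon>' x y) \<noteq> (\<epsilon> y z \<noteq> \<epsilon>' y z)) =
      ((\<epsilon> x y' \<noteq> \<epsilon>' x y') \<noteq> (\<epsilon> y' z \<noteq> \<epsilon>' y' z))"
    by argo
qed

lemma covers_downward_closed_iff:
  assumes "downward_closed P"
  shows "covers P x y \<longleftrightarrow> x \<in> P \<and> y \<in> P \<and> (\<exists>e. e \<notin> x \<and> y = insert e x)"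
proof
  assume c: "covers P x y"
  then have xy: "x \<in> P" "y \<in> P" "x \<subset> y" unfolding covers_def by auto
  then obtain e where e: "e \<in> y" "e \<notin> x" by auto
  have "insert e x \<in> P" using downward_closedD[OF assms xy(2)] xy e by auto
  then have "y = insert e x" using c e xy unfolding covers_def by blast
  then show "x \<in> P \<and> y \<in> P \<and> (\<exists>e. e \<notin> x \<and> y = insert e x)" using xy e by auto
qed (auto simp: covers_def)

lemma cocycle_insert_square:
  assumes P: "downward_closed P" and "cocycle P \<delta>"
    and ab: "a \<noteq> b" "a \<notin> x" "b \<notin> x" and z: "insert a (insert b x) \<in> P"
  shows "(\<delta> x (insert a x) \<noteq> \<delta> (insert a x) (insert a (insert b x))) =
         (\<delta> x (insert b x) \<noteq> \<delta> (insert b x) (insert a (insert b x)))"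
proof -
  have "x \<in> P" "insert a x \<in> P" "insert b x \<in> P"
    using downward_closedD[OF P z] by auto
  with P ab z have c: "covers P x (insert a x)" "covers P (insert a x) (insert a (insert b x))"
    "covers P x (insert b x)" "covers P (insert b x) (insert a (insert b x))"
    by (auto simp: covers_downward_closed_iff insert_commute)
  have "insert a x \<noteq> insert b x" using ab by auto
  from cocycleD[OF \<open>cocycle P \<delta>\<close> this c] show ?thesis .
qed

(* The sum of delta along the saturated chain from {} to set l that adds the elements of l
   from last to first. *)
fun chain_sum :: "('a set \<Rightarrow> 'a set \<Rightarrow> bool) \<Rightarrow> 'a list \<Rightarrow> bool" where
  "chain_sum \<delta> [] = False"
| "chain_sum \<delta> (e # l) = (chain_sum \<delta> l \<noteq> \<delta> (set l) (insert e (set l)))"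

lemma chain_sum_Cons_cong:
  "chain_sum \<delta> l = chain_sum \<delta> l' \<Longrightarrow> set l = set l' \<Longrightarrow> chain_sum \<delta> (e # l) = chain_sum \<delta> (e # l')"
  by simp

lemma chain_sum_swap:
  assumes "downward_closed P" and "cocycle P \<delta>"
    and "a \<noteq> b" "a \<notin> set l" "b \<notin> set l" "insert a (insert b (set l)) \<in> P"
  shows "chain_sum \<delta> (a # b # l) = chain_sum \<delta> (b # a # l)"
proof -
  have ba: "insert b (insert a (set l)) = insert a (insert b (set l))" by (rule insert_commute)
  from cocycle_insert_square[OF assms] show ?thesis
    unfolding chain_sum.simps list.set ba by argo
qed

lemma chain_sum_eqI:
  assumes P: "downward_closed P" and \<delta>: "cocycle P \<delta>"
  shows "distinct l \<Longrightarrow> distinct l' \<Longrightarrow> set l = set l' \<Longrightarrow> set l \<in> P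
    \<Longrightarrow> chain_sum \<delta> l = chain_sum \<delta> l'"
proof (induction "length l" arbitrary: l l')
  case 0
  then show ?case by simp
next
  case (Suc n)
  then obtain e m where l: "l = e # m" by (cases l) auto
  with Suc.prems(3) obtain e' m' where l': "l' = e' # m'" by (cases l') auto
  have "length l' = length l" using Suc.prems(1-3) by (metis distinct_card)
  with Suc.hyps(2) l l' have len: "length m = n" "length m' = n" by auto
  have Pm: "set m \<in> P" "set m' \<in> P"
    using downward_closedD[OF P Suc.prems(4)] Suc.prems(3) l l' by auto
  have dm: "distinct m" "distinct m'" using Suc.prems(1,2) l l' by auto
  have IH: "chain_sum \<delta> k = chain_sum \<delta> k'"
    if "length k = n" "distinct k" "distinct k'" "set k = set k'" "set k \<in> P" for k k'
    using Suc.hyps(1)[of k k'] that by simp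
  show ?case
  proof (cases "e = e'")
    case True
    with Suc.prems l l' have m: "set m = set m'" by auto
    show ?thesis
      unfolding l l' True by (rule chain_sum_Cons_cong[OF IH[OF len(1) dm m Pm(1)] m])
  next
    case False
    \<comment> \<open>reroute l through e # e' # k and l' through e' # e # k: these differ by one square\<close>
    obtain k where k: "distinct k" "set k = set m - {e'}"
      using finite_distinct_list[of "set m - {e'}"] by blast
    have m: "set m = insert e' (set k)" and m': "set m' = insert e (set k)"
      using Suc.prems False k l l' by auto
    have ek: "e \<notin> set k" "e' \<notin> set k" using Suc.prems(1) k l by auto
    then have cs: "chain_sum \<delta> m = chain_sum \<delta> (e' # k)" "chain_sum \<delta> m' = chain_sum \<delta> (e # k)"
      using IH[OF len(1) dm(1), of "e' # k"] IH[OF len(2) dm(2), of "e # k"] Pm k(1) m m'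
      by simp_all
    have "chain_sum \<delta> l = chain_sum \<delta> (e # e' # k)"
      unfolding l by (rule chain_sum_Cons_cong[OF cs(1)]) (simp add: m)
    also have "\<dots> = chain_sum \<delta> (e' # e # k)"
      using chain_sum_swap[OF P \<delta> False ek] Suc.prems(4) l m by simp
    also have "\<dots> = chain_sum \<delta> l'"
      unfolding l' by (rule chain_sum_Cons_cong[OF cs(2)[symmetric]]) (simp add: m')
    finally show ?thesis .
  qed
qed

theorem cocycle_coboundary:
  assumes fin: "\<And>x. x \<in> P \<Longrightarrow> finite x" and P: "downward_closed P" and \<delta>: "cocycle P \<delta>"
  shows "\<exists>\<eta>. \<forall>x y. covers P x y \<longrightarrow> \<eta> y = (\<eta> x \<noteq> \<delta> x y)"
proof -
  define enum :: "'a set \<Rightarrow> 'a list" where "enum x = (SOME l. distinct l \<and> set l = x)" for x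
  have enum: "distinct (enum x) \<and> set (enum x) = x" if "finite x" for x
    unfolding enum_def by (rule someI_ex) (use finite_distinct_list[OF that] in auto)
  have "\<forall>x y. covers P x y \<longrightarrow> chain_sum \<delta> (enum y) = (chain_sum \<delta> (enum x) \<noteq> \<delta> x y)"
  proof (intro allI impI)
    fix x y assume "covers P x y"
    obtain e where e: "e \<notin> x" "y = insert e x" "x \<in> P" "y \<in> P"
      using \<open>covers P x y\<close> covers_downward_closed_iff[OF P] by blast
    have x: "distinct (enum x)" "set (enum x) = x" and y: "distinct (enum y)" "set (enum y) = y"
      using enum fin e by auto
    have "chain_sum \<delta> (enum y) = chain_sum \<delta> (e # enum x)"
      by (rule chain_sum_eqI[OF P \<delta>]) (use x y e in simp_all)
    then show "chain_sum \<delta> (enum y) = (chain_sum \<delta> (enum x) \<noteq> \<delta> x y)" using x e by simp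
  qed
  then show ?thesis by (rule exI[where x="\<lambda>x. chain_sum \<delta> (enum x)"])
qed

definition path_edges :: "'v list \<Rightarrow> ('v \<times> 'v) set" where
  "path_edges vs = set (zip vs (tl vs))"

lemma simple_dpath_iff:
  "simple_dpath F vs \<longleftrightarrow> length vs \<ge> 2 \<and> distinct vs \<and> F = path_edges vs"
proof -
  have "{(vs ! i, vs ! (i + 1)) | i. i + 1 < length vs} = path_edges vs"
    by (auto simp: path_edges_def set_zip nth_tl)
  then show ?thesis unfolding simple_dpath_def by auto
qed

lemma path_edges_simps [simp]:
  "path_edges [] = {}"
  "path_edges [x] = {}"
  "path_edges (x # y # vs) = insert (x, y) (path_edges (y # vs))"
  by (simp_all add: path_edges_def)

lemma path_edges_subset: "path_edges vs \<subseteq> set vs \<times> set vs"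
  by (induction vs rule: induct_list012) auto

lemma path_edges_append:
  "us \<noteq> [] \<Longrightarrow> ws \<noteq> [] \<Longrightarrow>
    path_edges (us @ ws) = path_edges us \<union> insert (last us, hd ws) (path_edges ws)"
  by (induction us rule: induct_list012) (auto simp: neq_Nil_conv)

lemma path_split_at_edge:
  assumes "d \<in> path_edges vs"
  obtains us ws where "vs = us @ ws" "us \<noteq> []" "ws \<noteq> []" "d = (last us, hd ws)"
proof -
  obtain i where i: "i < length (tl vs)" "d = (vs ! i, tl vs ! i)"
    using assms unfolding path_edges_def set_zip by auto
  show ?thesis
  proof
    show "vs = take (Suc i) vs @ drop (Suc i) vs" by simp
    show "take (Suc i) vs \<noteq> []" "drop (Suc i) vs \<noteq> []" using i by auto
    show "d = (last (take (Suc i) vs), hd (drop (Suc i) vs))"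
      using i by (simp add: take_Suc_conv_app_nth hd_drop_conv_nth nth_tl)
  qed
qed

lemma sym_und_rel: "sym (und_rel S)"
  unfolding und_rel_def by (rule sym_Un_converse)

lemma und_rel_rtrancl_sym: "(v, w) \<in> (und_rel S)\<^sup>* \<Longrightarrow> (w, v) \<in> (und_rel S)\<^sup>*"
  using sym_rtrancl[OF sym_und_rel] by (rule symD)

lemma path_edges_connected:
  "path_edges vs \<subseteq> T \<Longrightarrow> u \<in> set vs \<Longrightarrow> w \<in> set vs \<Longrightarrow> (u, w) \<in> (und_rel T)\<^sup>*"
proof (induction vs arbitrary: u w rule: induct_list012)
  case (3 x y vs)
  have xy: "(x, y) \<in> (und_rel T)\<^sup>*" "(y, x) \<in> (und_rel T)\<^sup>*"
    using "3.prems"(1) by (auto simp: und_rel_def)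
  have "(u', w') \<in> (und_rel T)\<^sup>*" if "u' \<in> set (y # vs)" "w' \<in> set (y # vs)" for u' w'
    using "3.IH"(2) "3.prems"(1) that by simp
  then show ?case
    using "3.prems"(2,3) xy by (auto intro: rtrancl_trans)
qed auto

definition component_is_path :: "'v set \<Rightarrow> ('v \<times> 'v) set \<Rightarrow> 'v \<Rightarrow> bool" where
  "component_is_path V S v \<longleftrightarrow>
     (let C = component V S v; F = {e \<in> S. fst e \<in> C \<and> snd e \<in> C} in
        (C = {v} \<and> F = {}) \<or> (\<exists>vs. set vs = C \<and> simple_dpath F vs))"

lemma multipath_iff: "multipath V E S \<longleftrightarrow> S \<subseteq> E \<and> (\<forall>v\<in>V. component_is_path V S v)"
  unfolding multipath_def component_is_path_def ..

lemma component_is_pathI: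
  assumes ws: "distinct ws" "ws \<noteq> []" "set ws \<subseteq> V" and v: "v \<in> set ws"
    and edges: "path_edges ws \<subseteq> T"
    and isolated: "\<And>e. e \<in> T \<Longrightarrow> fst e \<in> set ws \<or> snd e \<in> set ws \<Longrightarrow> e \<in> path_edges ws"
  shows "component_is_path V T v"
proof -
  have "component V T v \<subseteq> set ws"
  proof
    fix w assume "w \<in> component V T v"
    then have "(v, w) \<in> (und_rel T)\<^sup>*" unfolding component_def by simp
    then show "w \<in> set ws"
    proof (induction rule: rtrancl_induct)
      case (step w w')
      then have "(w, w') \<in> path_edges ws \<or> (w', w) \<in> path_edges ws"
        using isolated unfolding und_rel_def by force
      then show ?case using path_edges_subset by blast
    qed (rule v)
  qed
  moreover have "set ws \<subseteq> component V T v"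
    using path_edges_connected[OF edges v] ws(3) unfolding component_def by auto
  ultimately have C: "component V T v = set ws" by (rule antisym)
  have F: "{e \<in> T. fst e \<in> set ws \<and> snd e \<in> set ws} = path_edges ws"
    using edges isolated path_edges_subset by fastforce
  show ?thesis
  proof (cases "length ws \<ge> 2")
    case True
    with ws(1) have "simple_dpath (path_edges ws) ws" by (simp add: simple_dpath_iff)
    then show ?thesis unfolding component_is_path_def Let_def C F by blast
  next
    case False
    with ws(2) v have "ws = [v]" by (cases ws) (auto simp: Suc_le_eq)
    then show ?thesis unfolding component_is_path_def Let_def C F by simp
  qed
qed

lemma rtrancl_und_rel_Diff_edge:
  assumes "(v, fst d) \<notin> (und_rel S)\<^sup>*"
  shows "(v, w) \<in> (und_rel (S - {d}))\<^sup>* \<longleftrightarrow> (v, w) \<in> (und_rel S)\<^sup>*"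
proof
  show "(v, w) \<in> (und_rel S)\<^sup>*" if "(v, w) \<in> (und_rel (S - {d}))\<^sup>*"
    using rtrancl_mono[of "und_rel (S - {d})" "und_rel S"] that by (auto simp: und_rel_def)
next
  assume "(v, w) \<in> (und_rel S)\<^sup>*"
  then show "(v, w) \<in> (und_rel (S - {d}))\<^sup>*"
  proof (induction rule: rtrancl_induct)
    case (step w w')
    \<comment> \<open>the walk never reaches the tail of d, so it never uses d\<close>
    have "(w, w') \<noteq> d" using step.hyps(1) assms by auto
    moreover have "(w', w) \<noteq> d"
    proof
      assume "(w', w) = d"
      with step.hyps have "(v, fst d) \<in> (und_rel S)\<^sup>*" by (auto intro: rtrancl_into_rtrancl)
      with assms show False ..
    qed
    ultimately have "(w, w') \<in> und_rel (S - {d})" using step.hyps(2) by (auto simp: und_rel_def)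
    with step.IH show ?case by (rule rtrancl_into_rtrancl)
  qed simp
qed

lemma component_is_path_Diff_edge:
  assumes "v \<in> V" "v \<notin> component V S (fst d)"
  shows "component_is_path V (S - {d}) v \<longleftrightarrow> component_is_path V S v"
proof -
  have "(v, fst d) \<notin> (und_rel S)\<^sup>*"
  proof
    assume "(v, fst d) \<in> (und_rel S)\<^sup>*"
    then have "(fst d, v) \<in> (und_rel S)\<^sup>*" by (rule und_rel_rtrancl_sym)
    with assms show False unfolding component_def by simp
  qed
  then have C: "component V (S - {d}) v = component V S v"
    and "fst d \<notin> component V S v"
    unfolding component_def using rtrancl_und_rel_Diff_edge[of v d S] by auto
  then have "{e \<in> S - {d}. fst e \<in> component V S v \<and> snd e \<in> component V S v} =
      {e \<in> S. fst e \<in> component V S v \<and> snd e \<in> component V S v}" by auto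
  then show ?thesis unfolding component_is_path_def Let_def C by simp
qed

lemma edge_in_component:
  assumes "S \<subseteq> V \<times> V" "e \<in> S" "fst e \<in> component V S v \<or> snd e \<in> component V S v"
  shows "fst e \<in> component V S v \<and> snd e \<in> component V S v"
proof -
  have "(fst e, snd e) \<in> und_rel S" "(snd e, fst e) \<in> und_rel S"
    using assms(2) by (auto simp: und_rel_def)
  then show ?thesis using assms unfolding component_def by (auto intro: rtrancl_into_rtrancl)
qed

lemma multipath_Diff_edge:
  assumes G: "digraph V E" and S: "multipath V E S" and d: "d \<in> S"
  shows "multipath V E (S - {d})"
proof -
  have SV: "S \<subseteq> V \<times> V" using G S unfolding digraph_def multipath_def by auto
  define C where "C = component V S (fst d)"
  define F where "F = {e \<in> S. fst e \<in> C \<and> snd e \<in> C}"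
  have "fst d \<in> C" using SV d unfolding C_def component_def by auto
  then have "d \<in> F" using edge_in_component[OF SV d] d unfolding F_def C_def by auto
  moreover have "component_is_path V S (fst d)" using S SV d unfolding multipath_iff by auto
  ultimately obtain vs where vs: "set vs = C" "distinct vs" "F = path_edges vs"
    unfolding component_is_path_def Let_def C_def[symmetric] F_def[symmetric] simple_dpath_iff
    by auto
  \<comment> \<open>removing d splits the path through d into the two paths us and ws\<close>
  obtain us ws where split: "vs = us @ ws" "us \<noteq> []" "ws \<noteq> []" "d = (last us, hd ws)"
    using path_split_at_edge \<open>d \<in> F\<close> vs(3) by blast
  have F_split: "F = path_edges us \<union> insert d (path_edges ws)"
    using vs(3) split path_edges_append by simp
  have part: "component_is_path V (S - {d}) v"
    if pq: "(p, q) \<in> {(us, ws), (ws, us)}" and v: "v \<in> set p" for p q v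
  proof (rule component_is_pathI[OF _ _ _ v])
    have disj: "set p \<inter> set q = {}" and p: "distinct p" "p \<noteq> []" "set p \<subseteq> C"
      using pq vs(1,2) split by auto
    have "fst d \<in> set q \<or> snd d \<in> set q" using pq split by auto
    with disj have "d \<notin> set p \<times> set p" by (cases d) auto
    then have "d \<notin> path_edges p" using path_edges_subset by auto
    moreover have "path_edges p \<subseteq> F" using pq F_split by auto
    ultimately show "path_edges p \<subseteq> S - {d}" unfolding F_def by auto
    show "e \<in> path_edges p" if "e \<in> S - {d}" "fst e \<in> set p \<or> snd e \<in> set p" for e
    proof -
      have "e \<in> F" using edge_in_component[OF SV, of e] that p(3) unfolding F_def C_def by auto
      then have "e \<in> path_edges p \<or> e \<in> path_edges q" using pq F_split that(1) by auto
      moreover have "e \<notin> set q \<times> set q" using that(2) disj by (cases e) auto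
      then have "e \<notin> path_edges q" using path_edges_subset by auto
      ultimately show ?thesis by simp
    qed
    show "distinct p" "p \<noteq> []" "set p \<subseteq> V" using p unfolding C_def component_def by auto
  qed
  have outside: "component_is_path V (S - {d}) v" if "v \<in> V" "v \<notin> C" for v
    using component_is_path_Diff_edge[OF that[unfolded C_def]] S that(1)
    unfolding multipath_iff by simp
  have "component_is_path V (S - {d}) v" if "v \<in> V" for v
  proof -
    have "v \<in> set us \<or> v \<in> set ws \<or> v \<notin> C" using vs(1) split(1) by auto
    then show ?thesis using part[of us ws v] part[of ws us v] outside[OF that] by auto
  qed
  then show ?thesis using S unfolding multipath_iff by auto
qed

lemma multipath_Diff:
  assumes "digraph V E" and "finite D"
  shows "multipath V E S \<Longrightarrow> multipath V E (S - D)"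
  using \<open>finite D\<close>
proof (induction D arbitrary: S rule: finite_induct)
  case (insert d D)
  have S_D: "multipath V E (S - D)" by (rule insert.IH[OF insert.prems])
  show ?case
  proof (cases "d \<in> S - D")
    case True
    have "S - insert d D = S - D - {d}" by auto
    with multipath_Diff_edge[OF assms(1) S_D True] show ?thesis by simp
  next
    case False
    then have "S - insert d D = S - D" by auto
    with S_D show ?thesis by simp
  qed
qed simp

lemma finite_path_poset_member:
  assumes "digraph V E" and "x \<in> path_poset V E"
  shows "finite x"
proof -
  have "finite E" using assms(1) unfolding digraph_def by (auto intro: finite_subset)
  moreover have "x \<subseteq> E" using assms(2) unfolding path_poset_def multipath_def by simp
  ultimately show ?thesis by (rule finite_subset[rotated])
qed

lemma downward_closed_path_poset:
  assumes "digraph V E"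
  shows "downward_closed (path_poset V E)"
  unfolding downward_closed_def
proof (intro ballI allI impI)
  fix x y assume x: "x \<in> path_poset V E" and "y \<subseteq> x"
  then have "y = x - (x - y)" by auto
  moreover have "multipath V E (x - (x - y))"
    using multipath_Diff[OF assms] finite_path_poset_member[OF assms x] x
    unfolding path_poset_def by simp
  ultimately show "y \<in> path_poset V E" unfolding path_poset_def by simp
qed

theorem corollary3p17:
  fixes V :: "'v set" and E :: "('v \<times> 'v) set"
    and \<epsilon> \<epsilon>' :: "('v \<times> 'v) set \<Rightarrow> ('v \<times> 'v) set \<Rightarrow> bool"
  assumes "digraph V E"
    and "sign_assignment (path_poset V E) \<epsilon>"
    and "sign_assignment (path_poset V E) \<epsilon>'"
  shows "\<exists>\<eta> :: ('v \<times> 'v) set \<Rightarrow> bool. \<forall>x y. covers (path_poset V E) x y \<longrightarrow>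
           ((\<eta> x \<noteq> \<epsilon>' x y) = (\<epsilon> x y \<noteq> \<eta> y))"
proof -
  have "cocycle (path_poset V E) (\<lambda>x y. \<epsilon> x y \<noteq> \<epsilon>' x y)"
    using assms(2,3) by (rule sign_assignment_diff_cocycle)
  with cocycle_coboundary[OF finite_path_poset_member[OF assms(1)] downward_closed_path_poset[OF assms(1)]]
  obtain \<eta> where \<eta>: "\<forall>x y. covers (path_poset V E) x y \<longrightarrow> \<eta> y = (\<eta> x \<noteq> (\<epsilon> x y \<noteq> \<epsilon>' x y))"
    by blast
  show ?thesis
  proof (intro exI allI impI)
    fix x y assume "covers (path_poset V E) x y"
    with \<eta> have "\<eta> y = (\<eta> x \<noteq> (\<epsilon> x y \<noteq> \<epsilon>' x y))" by blast
    then show "(\<eta> x \<noteq> \<epsilon>' x y) = (\<epsilon> x y \<noteq> \<eta> y)" by argo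
  qed
qed

end
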